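(* Let $C\subseteq\mathbb{S}$ be an s-convex set. Then: (i) there is $u_0\in\mathbb{R}^n$ with $\|u_0\|=1$ such that $C\subseteq\{x\in\mathbb{R}^n\mid\langle x,u_0\rangle\ge0\}\cap\mathbb{S}$; (ii) if moreover $C$ is closed, there are $u_0\in\mathbb{R}^n$ with $\|u_0\|=1$ and $\alpha>0$ such that $C\subseteq\{x\in\mathbb{R}^n\mid\langle x,u_0\rangle\ge\alpha\}\cap\mathbb{S}$; in particular $C\subseteq\{x\in\mathbb{S}\mid \langle x,u_0\rangle>0\}$.
   Context: Standing setting: $n\ge 2$; $\mathbb{R}^n$ carries the usual inner product $\langle\cdot,\cdot\rangle$ and Euclidean norm $\|\cdot\|$; $o$ denotes the zero vector. $\Phi:\mathbb{R}^n\to\mathbb{R}_+:=[0,\infty)$ is a continuous function with $\Phi(tx)=t\Phi(x)$ for all $x\in\mathbb{R}^n$, $t\ge 0$, and $\Phi(x)=0$ iff $x=o$. Set $\mathbb{S}:=\{x\in\mathbb{R}^n\mid \Phi(x)=1\}$ (with the topology induced from $\mathbb{R}^n$), and $\rho:\mathbb{R}^n\to\{o\}\cup\mathbb{S}$, $\rho(x):=x/\Phi(x)$ for $x\neq o$, $\rho(o):=o$. For $x,y\in\mathbb{S}$, $\lambda\in[0,1]$, $\lambda x+_s(1-\lambda)y:=\rho(\lambda x+(1-\lambda)y)$. A nonempty set $S\subseteq\mathbb{S}$ is called s-convex if $\lambda x+_s(1-\lambda)y\in S$ for all $x,y\in S$ and $\lambda\in[0,1]$. *)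

theory Defs
  imports "HOL-Analysis.Analysis"
begin

definition gauge_fun :: "(real^'n \<Rightarrow> real) \<Rightarrow> bool" where
  "gauge_fun Phi \<longleftrightarrow> continuous_on UNIV Phi \<and> (\<forall>x. Phi x \<ge> 0) \<and>
     (\<forall>x t. t \<ge> 0 \<longrightarrow> Phi (t *\<^sub>R x) = t * Phi x) \<and> (\<forall>x. Phi x = 0 \<longleftrightarrow> x = 0)"

definition Ssph :: "(real^'n \<Rightarrow> real) \<Rightarrow> (real^'n) set" where
  "Ssph Phi = {x. Phi x = 1}"

definition rho :: "(real^'n \<Rightarrow> real) \<Rightarrow> real^'n \<Rightarrow> real^'n" where
  "rho Phi x = (if x = 0 then 0 else (1 / Phi x) *\<^sub>R x)"

definition scomb :: "(real^'n \<Rightarrow> real) \<Rightarrow> real \<Rightarrow> real^'n \<Rightarrow> real^'n \<Rightarrow> real^'n" where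
  "scomb Phi l x y = rho Phi (l *\<^sub>R x + (1 - l) *\<^sub>R y)"

definition s_convex :: "(real^'n \<Rightarrow> real) \<Rightarrow> (real^'n) set \<Rightarrow> bool" where
  "s_convex Phi S \<longleftrightarrow> S \<noteq> {} \<and> S \<subseteq> Ssph Phi \<and>
     (\<forall>x\<in>S. \<forall>y\<in>S. \<forall>l\<in>{0..1}. scomb Phi l x y \<in> S)"

end

theory Submission
  imports Defs
begin

text \<open>The positive cone over C is convex: a positive combination of t x and r y with x, y in C
  is a positive multiple of a point z of the segment [x, y], and z = Phi z rho z, where rho z
  is an s-combination of x and y, hence lies in C. The cone misses 0, hence so does the convex
  hull of C, and 0 is separated from C by a hyperplane through 0. If C is closed in the compact
  sphere S, it is compact and the separation is strict.\<close>

lemma gauge_funD: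
  assumes "gauge_fun Phi"
  shows "continuous_on UNIV Phi" "Phi x \<ge> 0" "t \<ge> 0 \<Longrightarrow> Phi (t *\<^sub>R x) = t * Phi x"
    "Phi x = 0 \<longleftrightarrow> x = 0"
  using assms unfolding gauge_fun_def by blast+

lemma gauge_fun_pos:
  assumes "gauge_fun Phi" "x \<noteq> 0"
  shows "Phi x > 0"
  using gauge_funD(2,4)[OF assms(1)] assms(2) by (metis less_eq_real_def)

lemma scaleR_rho:
  assumes "gauge_fun Phi" "x \<noteq> 0"
  shows "Phi x *\<^sub>R rho Phi x = x"
  using gauge_fun_pos[OF assms] assms(2) by (simp add: rho_def)

lemma s_convexD:
  assumes "s_convex Phi C"
  shows "C \<subseteq> Ssph Phi" "x \<in> C \<Longrightarrow> y \<in> C \<Longrightarrow> 0 \<le> l \<Longrightarrow> l \<le> 1 \<Longrightarrow> scomb Phi l x y \<in> C"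
  using assms unfolding s_convex_def by auto

lemma zero_notin_s_convex:
  assumes "gauge_fun Phi" "s_convex Phi C"
  shows "0 \<notin> C"
  using s_convexD(1)[OF assms(2)] gauge_funD(4)[OF assms(1), of 0] by (auto simp: Ssph_def)

definition positive_cone :: "'a::real_vector set \<Rightarrow> 'a set" where
  "positive_cone C = {t *\<^sub>R c | t c. 0 < t \<and> c \<in> C}"

lemma subset_positive_cone: "C \<subseteq> positive_cone C"
  unfolding positive_cone_def by (force intro: exI[of _ 1])

lemma zero_notin_positive_cone: "0 \<notin> C \<Longrightarrow> 0 \<notin> positive_cone C"
  unfolding positive_cone_def by auto

lemma convex_positive_cone_s_convex:
  fixes Phi :: "real^'n \<Rightarrow> real"
  assumes g: "gauge_fun Phi" and s: "s_convex Phi C"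
  shows "convex (positive_cone C)"
  unfolding convex_def
proof (intro allI impI ballI)
  fix p q :: "real^'n" and u v :: real
  assume "p \<in> positive_cone C" "q \<in> positive_cone C" and uv: "0 \<le> u" "0 \<le> v" "u + v = 1"
  then obtain t x r y where p: "p = t *\<^sub>R x" "t > 0" "x \<in> C" and q: "q = r *\<^sub>R y" "r > 0" "y \<in> C"
    unfolding positive_cone_def by blast
  define a b where "a = u * t" and "b = v * r"
  have "a \<ge> 0" "b \<ge> 0"
    using uv p q by (auto simp: a_def b_def)
  have "a + b > 0"
    using uv p q by (cases "u = 0") (auto simp: a_def b_def intro: add_pos_nonneg)
  define l where "l = a / (a + b)"
  have l: "0 \<le> l" "l \<le> 1" "(a + b) * l = a" "(a + b) * (1 - l) = b"
    using \<open>a \<ge> 0\<close> \<open>b \<ge> 0\<close> \<open>a + b > 0\<close> by (auto simp: l_def field_simps)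
  define z where "z = l *\<^sub>R x + (1 - l) *\<^sub>R y"
  have zC: "rho Phi z \<in> C"
    using s_convexD(2)[OF s p(3) q(3) l(1,2)] by (simp add: scomb_def z_def)
  have "z \<noteq> 0"
    using zC zero_notin_s_convex[OF g s] by (auto simp: rho_def)
  have "u *\<^sub>R p + v *\<^sub>R q = a *\<^sub>R x + b *\<^sub>R y"
    by (simp add: p q a_def b_def)
  also have "\<dots> = (a + b) *\<^sub>R z"
    by (simp add: z_def scaleR_add_right l(3,4))
  also have "\<dots> = ((a + b) * Phi z) *\<^sub>R rho Phi z"
    by (metis scaleR_rho[OF g \<open>z \<noteq> 0\<close>] scaleR_scaleR)
  finally show "u *\<^sub>R p + v *\<^sub>R q \<in> positive_cone C"
    unfolding positive_cone_def
    using \<open>a + b > 0\<close> gauge_fun_pos[OF g \<open>z \<noteq> 0\<close>] zC by fastforce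
qed

lemma zero_notin_convex_hull_s_convex:
  assumes "gauge_fun Phi" "s_convex Phi C"
  shows "0 \<notin> convex hull C"
proof -
  have "convex hull C \<subseteq> positive_cone C"
    using convex_positive_cone_s_convex[OF assms] by (intro hull_minimal subset_positive_cone)
  with zero_notin_positive_cone[OF zero_notin_s_convex[OF assms]] show ?thesis by blast
qed

lemma compact_Ssph:
  fixes Phi :: "real^'n \<Rightarrow> real"
  assumes g: "gauge_fun Phi"
  shows "compact (Ssph Phi)"
proof -
  note cont = gauge_funD(1)[OF g]
  have "closed (Ssph Phi)"
    unfolding Ssph_def by (rule closed_Collect_eq[OF cont continuous_on_const])
  obtain w where w: "w \<in> sphere (0::real^'n) 1" "\<And>y. y \<in> sphere 0 1 \<Longrightarrow> Phi w \<le> Phi y"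
    using continuous_attains_inf[OF compact_sphere _ continuous_on_subset[OF cont subset_UNIV],
        of 0 1]
    by auto
  have "w \<noteq> 0"
    using w(1) by auto
  then have m: "Phi w > 0"
    by (rule gauge_fun_pos[OF g])
  \<comment> \<open>By homogeneity, the minimum of Phi on the Euclidean unit sphere bounds S.\<close>
  have "norm x \<le> 1 / Phi w" if "x \<in> Ssph Phi" for x
  proof -
    have x: "Phi x = 1" "x \<noteq> 0"
      using that gauge_funD(4)[OF g, of x] by (auto simp: Ssph_def)
    have "Phi x = norm x * Phi ((1 / norm x) *\<^sub>R x)"
      using gauge_funD(3)[OF g, of "norm x" "(1 / norm x) *\<^sub>R x"] x(2) by simp
    moreover have "Phi w \<le> Phi ((1 / norm x) *\<^sub>R x)"
      using w(2) x(2) by simp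
    ultimately have "norm x * Phi w \<le> 1"
      using x(1) mult_left_mono[of "Phi w" _ "norm x"] by fastforce
    then show ?thesis using m by (simp add: field_simps)
  qed
  then have "bounded (Ssph Phi)" unfolding bounded_iff by blast
  with \<open>closed (Ssph Phi)\<close> show ?thesis by (simp add: compact_eq_bounded_closed)
qed

lemma unit_halfspace_if_zero_notin_convex_hull:
  fixes C :: "'a::euclidean_space set"
  assumes "0 \<notin> convex hull C"
  shows "\<exists>u. norm u = 1 \<and> (\<forall>x\<in>C. x \<bullet> u \<ge> 0)"
proof -
  obtain a where "a \<noteq> 0" "\<forall>x\<in>convex hull C. 0 \<le> a \<bullet> x"
    using separating_hyperplane_set_0[OF convex_convex_hull assms] by blast
  then show ?thesis
    using hull_subset[of C convex]
    by (intro exI[of _ "(1 / norm a) *\<^sub>R a"]) (auto simp: inner_commute)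
qed

lemma unit_halfspace_strict_if_zero_notin_convex_hull:
  fixes C :: "'a::euclidean_space set"
  assumes "compact C" "0 \<notin> convex hull C"
  shows "\<exists>u \<alpha>. norm u = 1 \<and> \<alpha> > 0 \<and> (\<forall>x\<in>C. x \<bullet> u \<ge> \<alpha>)"
proof -
  have "closed (convex hull C)"
    using assms(1) by (simp add: compact_convex_hull compact_imp_closed)
  then obtain b \<beta> where b: "b \<noteq> 0" "0 < \<beta>" "\<forall>x\<in>convex hull C. b \<bullet> x > \<beta>"
    using separating_hyperplane_closed_0[OF convex_convex_hull _ assms(2)] by blast
  have "x \<bullet> ((1 / norm b) *\<^sub>R b) \<ge> \<beta> / norm b" if "x \<in> C" for x
  proof -
    have "\<beta> \<le> b \<bullet> x"
      using b(3) hull_subset[of C convex] that by (auto intro: less_imp_le)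
    then show ?thesis
      by (simp add: inner_commute divide_right_mono)
  qed
  then show ?thesis
    using b(1,2) by (intro exI[of _ "(1 / norm b) *\<^sub>R b"] exI[of _ "\<beta> / norm b"]) auto
qed

theorem mainTheorem4:
  fixes Phi :: "real^'n \<Rightarrow> real" and C :: "(real^'n) set"
  assumes "CARD('n) \<ge> 2"
    and "gauge_fun Phi"
    and "s_convex Phi C"
  shows "(\<exists>u0. norm u0 = 1 \<and> C \<subseteq> {x. x \<bullet> u0 \<ge> 0} \<inter> Ssph Phi)
       \<and> (closedin (top_of_set (Ssph Phi)) C \<longrightarrow>
           (\<exists>u0 \<alpha>. norm u0 = 1 \<and> \<alpha> > 0 \<and> C \<subseteq> {x. x \<bullet> u0 \<ge> \<alpha>} \<inter> Ssph Phi
                  \<and> C \<subseteq> {x \<in> Ssph Phi. x \<bullet> u0 > 0}))"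
proof -
  have CS: "C \<subseteq> Ssph Phi" by (rule s_convexD(1)[OF assms(3)])
  have hull: "0 \<notin> convex hull C" by (rule zero_notin_convex_hull_s_convex[OF assms(2,3)])
  have "closedin (top_of_set (Ssph Phi)) C \<Longrightarrow> compact C"
    using compact_Ssph[OF assms(2)] closedin_compact by blast
  then show ?thesis
    using unit_halfspace_if_zero_notin_convex_hull[OF hull]
      unit_halfspace_strict_if_zero_notin_convex_hull[OF _ hull] CS
    by (fastforce intro: less_le_trans)
qed

end
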